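(* Let $w$ be a $\gamma$-stable instance of MAXCUT and let $w'$ be obtained from $w$ by merging two vertices $u,v$ that lie on the same side of $w$'s maximal cut. Then $w'$ is $\gamma$-stable and its maximal cut is the one induced from $w$'s maximal cut.
   Context: An instance of MAXCUT is a finite vertex set $V$ with a symmetric $w:V\times V\to[0,\infty)$ with zero diagonal. A $\gamma$-perturbation of $w$ is $w'$ with $w(a,b)\le w'(a,b)\le\gamma w(a,b)$ for all $a,b$; $w$ is $\gamma$-stable if some cut is maximal for every $\gamma$-perturbation (for $\gamma>1$ this cut is the unique maximal cut). Merging $u,v\in V$ gives the instance on $V'=(V\setminus\{u,v\})\cup\{v'\}$ with $w'(x,y)=w(x,y)$ for $x,y\in V\setminus\{u,v\}$ and $w'(v',x)=w(v,x)+w(u,x)$. The induced cut places $v'$ on the common side of $u,v$ and every other vertex on its original side. *)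

theory Defs
  imports Complex_Main
begin

definition maxcut_instance :: "'a set \<Rightarrow> ('a \<Rightarrow> 'a \<Rightarrow> real) \<Rightarrow> bool" where
  "maxcut_instance V w \<longleftrightarrow> finite V \<and>
     (\<forall>a\<in>V. \<forall>b\<in>V. w a b = w b a \<and> 0 \<le> w a b) \<and> (\<forall>a\<in>V. w a a = 0)"

text \<open>A cut is represented by one of its sides S \<subseteq> V (the other side is V - S).\<close>
definition cut_value :: "'a set \<Rightarrow> ('a \<Rightarrow> 'a \<Rightarrow> real) \<Rightarrow> 'a set \<Rightarrow> real" where
  "cut_value V w S = (\<Sum>a\<in>S. \<Sum>b\<in>V - S. w a b)"

definition is_max_cut :: "'a set \<Rightarrow> ('a \<Rightarrow> 'a \<Rightarrow> real) \<Rightarrow> 'a set \<Rightarrow> bool" where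
  "is_max_cut V w S \<longleftrightarrow> S \<subseteq> V \<and> (\<forall>T. T \<subseteq> V \<longrightarrow> cut_value V w T \<le> cut_value V w S)"

definition perturbation :: "'a set \<Rightarrow> real \<Rightarrow> ('a \<Rightarrow> 'a \<Rightarrow> real) \<Rightarrow> ('a \<Rightarrow> 'a \<Rightarrow> real) \<Rightarrow> bool" where
  "perturbation V \<gamma> w w' \<longleftrightarrow> maxcut_instance V w' \<and>
     (\<forall>a\<in>V. \<forall>b\<in>V. w a b \<le> w' a b \<and> w' a b \<le> \<gamma> * w a b)"

definition stable_cut :: "'a set \<Rightarrow> real \<Rightarrow> ('a \<Rightarrow> 'a \<Rightarrow> real) \<Rightarrow> 'a set \<Rightarrow> bool" where
  "stable_cut V \<gamma> w S \<longleftrightarrow> S \<subseteq> V \<and> (\<forall>w'. perturbation V \<gamma> w w' \<longrightarrow> is_max_cut V w' S)"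

definition gamma_stable :: "'a set \<Rightarrow> real \<Rightarrow> ('a \<Rightarrow> 'a \<Rightarrow> real) \<Rightarrow> bool" where
  "gamma_stable V \<gamma> w \<longleftrightarrow> (\<exists>S. stable_cut V \<gamma> w S)"

text \<open>Merging u into v: the merged vertex v' is named v, so the new vertex set is V - {u}.\<close>
definition merge_set :: "'a set \<Rightarrow> 'a \<Rightarrow> 'a \<Rightarrow> 'a set" where
  "merge_set V u v = V - {u}"

definition merge_weight :: "('a \<Rightarrow> 'a \<Rightarrow> real) \<Rightarrow> 'a \<Rightarrow> 'a \<Rightarrow> 'a \<Rightarrow> 'a \<Rightarrow> real" where
  "merge_weight w u v x y =
     (if x = v \<and> y = v then 0
      else if x = v then w v y + w u y
      else if y = v then w x v + w x u
      else w x y)"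

definition induced_cut :: "'a set \<Rightarrow> 'a \<Rightarrow> 'a \<Rightarrow> 'a set" where
  "induced_cut S u v = (if v \<in> S then (S - {u}) \<union> {v} else S - {u, v})"

end

theory Submission
  imports Defs
begin

text \<open>Given a perturbation p of the merged instance, split each merged weight p v z back onto
  the two edges u z and v z in the ratio w u z : w v z, and keep p on all other edges. The result
  is a perturbation of w which merges to p, so S is maximal for it; and cuts of the merged
  instance are exactly the cuts of the original one that do not separate u from v, with the same
  values. Hence the cut induced by S is maximal for p. (For \<gamma> < 1 the splitting fails, but
  then a perturbation can only exist when all weights vanish.)\<close>

definition unmerge_cut :: "'a set \<Rightarrow> 'a \<Rightarrow> 'a \<Rightarrow> 'a set" where
  "unmerge_cut T u v = (if v \<in> T then insert u T else T)"

lemma unmerge_cut_subset: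
  "T \<subseteq> merge_set V u v \<Longrightarrow> u \<in> V \<Longrightarrow> unmerge_cut T u v \<subseteq> V"
  unfolding unmerge_cut_def merge_set_def by auto

lemma induced_cut_subset:
  "S \<subseteq> V \<Longrightarrow> v \<in> V \<Longrightarrow> u \<noteq> v \<Longrightarrow> induced_cut S u v \<subseteq> merge_set V u v"
  unfolding induced_cut_def merge_set_def by auto

lemma unmerge_induced_cut:
  "(u \<in> S \<longleftrightarrow> v \<in> S) \<Longrightarrow> unmerge_cut (induced_cut S u v) u v = S"
  unfolding unmerge_cut_def induced_cut_def by auto

lemma cut_value_cong:
  assumes "\<forall>a\<in>V. \<forall>b\<in>V. w a b = w' a b" and "S \<subseteq> V"
  shows "cut_value V w S = cut_value V w' S"
  unfolding cut_value_def using assms by (intro sum.cong) auto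

lemma cut_value_merge:
  assumes fin: "finite V" and "u \<in> V" "v \<in> V" "u \<noteq> v" and T: "T \<subseteq> merge_set V u v"
  shows "cut_value (merge_set V u v) (merge_weight W u v) T = cut_value V W (unmerge_cut T u v)"
proof -
  define B where "B = V - {u} - T"
  define m where "m = merge_weight W u v"
  have fT: "finite T" and fB: "finite B" and uT: "u \<notin> T"
    using T fin finite_subset unfolding B_def merge_set_def by auto
  have merged: "cut_value (merge_set V u v) m T = (\<Sum>a\<in>T. \<Sum>b\<in>B. m a b)"
    unfolding cut_value_def merge_set_def B_def ..
  show ?thesis
  proof (cases "v \<in> T")
    case True
    have VB: "V - insert u T = B" unfolding B_def by auto
    have mvb: "m v b = W v b + W u b" and mab: "a \<in> T - {v} \<Longrightarrow> m a b = W a b"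
      if "b \<in> B" for a b using that True unfolding m_def merge_weight_def B_def by auto
    have "cut_value V W (insert u T) = (\<Sum>b\<in>B. W u b) + (\<Sum>a\<in>T. \<Sum>b\<in>B. W a b)"
      unfolding cut_value_def VB using uT fT by simp
    also have "\<dots> = (\<Sum>b\<in>B. W u b) + (\<Sum>b\<in>B. W v b) + (\<Sum>a\<in>T - {v}. \<Sum>b\<in>B. W a b)"
      using sum.remove[OF fT True, of "\<lambda>a. \<Sum>b\<in>B. W a b"] by simp
    also have "\<dots> = (\<Sum>b\<in>B. m v b) + (\<Sum>a\<in>T - {v}. \<Sum>b\<in>B. m a b)"
      using mvb mab by (simp add: sum.distrib)
    also have "\<dots> = (\<Sum>a\<in>T. \<Sum>b\<in>B. m a b)"
      using sum.remove[OF fT True, of "\<lambda>a. \<Sum>b\<in>B. m a b"] by simp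
    finally show ?thesis using True merged unfolding unmerge_cut_def m_def by simp
  next
    case False
    have vB: "v \<in> B" using False assms(3,4) unfolding B_def by auto
    have VT: "V - T = insert u B" using T assms(2) unfolding B_def merge_set_def by auto
    have row: "(\<Sum>b\<in>V - T. W a b) = (\<Sum>b\<in>B. m a b)" if a: "a \<in> T" for a
    proof -
      have av: "a \<noteq> v" "a \<noteq> u" using a False uT by auto
      have mb: "b \<in> B - {v} \<Longrightarrow> m a b = W a b" for b
        using av unfolding m_def merge_weight_def by auto
      have "(\<Sum>b\<in>V - T. W a b) = W a u + W a v + (\<Sum>b\<in>B - {v}. W a b)"
        unfolding VT using fB sum.remove[OF fB vB, of "W a"] by (simp add: B_def)
      also have "\<dots> = m a v + (\<Sum>b\<in>B - {v}. m a b)"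
        using av mb unfolding m_def merge_weight_def by simp
      also have "\<dots> = (\<Sum>b\<in>B. m a b)"
        using sum.remove[OF fB vB, of "m a"] by simp
      finally show ?thesis .
    qed
    have "cut_value V W T = (\<Sum>a\<in>T. \<Sum>b\<in>B. m a b)"
      unfolding cut_value_def using row by (rule sum.cong[OF refl])
    then show ?thesis using False merged unfolding unmerge_cut_def m_def by simp
  qed
qed

lemma maxcut_instance_merge:
  assumes "maxcut_instance V w" and "u \<in> V"
  shows "maxcut_instance (merge_set V u v) (merge_weight w u v)"
  using assms unfolding maxcut_instance_def merge_set_def merge_weight_def
  by (auto intro!: add_nonneg_nonneg)

lemma perturbation_below_one_vanishes:
  assumes p: "perturbation V \<gamma> w p" and "\<gamma> < 1"
    and w: "\<forall>a\<in>V. \<forall>b\<in>V. 0 \<le> w a b" and "a \<in> V" "b \<in> V"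
  shows "p a b = 0"
proof -
  have bounds: "w a b \<le> p a b" "p a b \<le> \<gamma> * w a b"
    using p assms(4,5) unfolding perturbation_def by auto
  have "w a b = 0"
  proof (rule ccontr)
    assume "w a b \<noteq> 0"
    then have "0 < w a b" using w assms(4,5) by force
    then have "\<gamma> * w a b < 1 * w a b" using assms(2) by (rule mult_strict_right_mono[rotated])
    then show False using bounds by linarith
  qed
  then show ?thesis using bounds by simp
qed

lemma is_max_cut_if_zero:
  assumes "\<forall>a\<in>V. \<forall>b\<in>V. p a b = 0" and "S \<subseteq> V"
  shows "is_max_cut V p S"
proof -
  have "cut_value V p T = 0" if "T \<subseteq> V" for T
    using assms(1) that unfolding cut_value_def by (auto intro!: sum.neutral)
  then show ?thesis using assms(2) unfolding is_max_cut_def by simp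
qed

lemma ratio_between:
  fixes x y \<gamma> :: real
  assumes "0 \<le> x" "x \<le> y" "y \<le> \<gamma> * x" "1 \<le> \<gamma>"
  shows "\<exists>t. 1 \<le> t \<and> t \<le> \<gamma> \<and> y = x * t"
proof (cases "x = 0")
  case True
  then show ?thesis using assms by (intro exI[of _ 1]) simp
next
  case False
  then show ?thesis using assms by (intro exI[of _ "y / x"]) (auto simp: field_simps)
qed

lemma perturbation_unmerge:
  assumes w: "maxcut_instance V w" and uV: "u \<in> V" and vV: "v \<in> V" and "u \<noteq> v"
    and \<gamma>: "1 \<le> \<gamma>" and p: "perturbation (merge_set V u v) \<gamma> (merge_weight w u v) p"
  obtains W where "perturbation V \<gamma> w W"
    and "\<forall>a\<in>merge_set V u v. \<forall>b\<in>merge_set V u v. merge_weight W u v a b = p a b"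
proof -
  let ?V' = "merge_set V u v"
  have V': "?V' = V - {u}" unfolding merge_set_def ..
  have w_sym: "w a b = w b a" and w_nn: "0 \<le> w a b" if "a \<in> V" "b \<in> V" for a b
    using w that unfolding maxcut_instance_def by auto
  have p_sym: "p a b = p b a"
    and p_bounds: "merge_weight w u v a b \<le> p a b" "p a b \<le> \<gamma> * merge_weight w u v a b"
    if "a \<in> ?V'" "b \<in> ?V'" for a b
    using p that unfolding perturbation_def maxcut_instance_def by auto
  have "\<exists>t. 1 \<le> t \<and> t \<le> \<gamma> \<and> p v z = (w v z + w u z) * t" if z: "z \<in> V - {u, v}" for z
  proof -
    have "merge_weight w u v v z = w v z + w u z" using z unfolding merge_weight_def by auto
    moreover have "v \<in> ?V'" "z \<in> ?V'" using z vV \<open>u \<noteq> v\<close> unfolding V' by auto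
    ultimately show ?thesis
      using ratio_between[OF _ _ _ \<gamma>] p_bounds w_nn z uV vV by (metis Diff_iff add_nonneg_nonneg)
  qed
  then obtain t where t: "\<And>z. z \<in> V - {u, v} \<Longrightarrow> 1 \<le> t z \<and> t z \<le> \<gamma> \<and> p v z = (w v z + w u z) * t z"
    by metis
  define W where "W x y =
      (if x \<in> {u, v} \<and> y \<in> {u, v} then w x y
       else if x \<in> {u, v} then w x y * t y
       else if y \<in> {u, v} then w x y * t x
       else p x y)" for x y
  have scaled: "w a b \<le> w a b * s \<and> w a b * s \<le> \<gamma> * w a b" if "1 \<le> s" "s \<le> \<gamma>" "0 \<le> w a b" for a b s
    using that mult_right_mono[of 1 s "w a b"] mult_right_mono[of s \<gamma> "w a b"] by (simp add: mult.commute)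
  have W_bounds: "w a b \<le> W a b \<and> W a b \<le> \<gamma> * w a b" if ab: "a \<in> V" "b \<in> V" for a b
  proof -
    have "merge_weight w u v a b = w a b" if "a \<notin> {u, v}" "b \<notin> {u, v}"
      using that unfolding merge_weight_def by auto
    then show ?thesis
      using scaled[of 1] scaled[of "t a"] scaled[of "t b"] t[of a] t[of b] \<gamma> w_nn[OF ab]
        p_bounds[of a b] ab unfolding W_def V' by auto
  qed
  have W_sym: "W a b = W b a" if "a \<in> V" "b \<in> V" for a b
    using that w_sym p_sym unfolding W_def V' by auto
  have W_diag: "W a a = 0" if "a \<in> V" for a
    using that w p unfolding W_def V' perturbation_def maxcut_instance_def by auto
  have "perturbation V \<gamma> w W"
    unfolding perturbation_def maxcut_instance_def
    using w W_bounds W_sym W_diag w_nn unfolding maxcut_instance_def by (blast intro: order_trans)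
  moreover have "merge_weight W u v a b = p a b" if ab: "a \<in> ?V'" "b \<in> ?V'" for a b
  proof -
    have "p v v = 0" using p vV \<open>u \<noteq> v\<close> unfolding perturbation_def maxcut_instance_def V' by auto
    moreover have "W v b + W u b = p v b" if "b \<noteq> v" using t[of b] that ab \<open>u \<noteq> v\<close>
      unfolding W_def V' by (auto simp: algebra_simps)
    moreover have "W a v + W a u = p a v" if "a \<noteq> v"
      using t[of a] that ab w_sym[of a u] w_sym[of a v] p_sym[of a v] uV vV \<open>u \<noteq> v\<close>
      unfolding W_def V' by (auto simp: algebra_simps)
    moreover have "W a b = p a b" if "a \<noteq> v" "b \<noteq> v" using that ab unfolding W_def V' by auto
    ultimately show ?thesis unfolding merge_weight_def by auto
  qed
  ultimately show thesis using that by blast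
qed

lemma is_max_cut_merge:
  assumes fin: "finite V" and uV: "u \<in> V" and vV: "v \<in> V" and uv: "u \<noteq> v"
    and max: "is_max_cut V W S" and side: "u \<in> S \<longleftrightarrow> v \<in> S"
    and p: "\<forall>a\<in>merge_set V u v. \<forall>b\<in>merge_set V u v. merge_weight W u v a b = p a b"
  shows "is_max_cut (merge_set V u v) p (induced_cut S u v)"
proof -
  let ?V' = "merge_set V u v" and ?S' = "induced_cut S u v"
  have cut_p: "cut_value ?V' p T = cut_value V W (unmerge_cut T u v)" if "T \<subseteq> ?V'" for T
    using cut_value_cong[OF p that] cut_value_merge[OF fin uV vV uv that] by simp
  have S': "?S' \<subseteq> ?V'"
    using max induced_cut_subset[OF _ vV uv] unfolding is_max_cut_def by simp
  have "cut_value ?V' p T \<le> cut_value ?V' p ?S'" if T: "T \<subseteq> ?V'" for T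
  proof -
    have "cut_value ?V' p T = cut_value V W (unmerge_cut T u v)" using cut_p[OF T] .
    also have "\<dots> \<le> cut_value V W S"
      using max unmerge_cut_subset[OF T uV] unfolding is_max_cut_def by simp
    also have "\<dots> = cut_value ?V' p ?S'" using cut_p[OF S'] unmerge_induced_cut[OF side] by simp
    finally show ?thesis .
  qed
  then show ?thesis using S' unfolding is_max_cut_def by simp
qed

theorem mainTheorem11:
  fixes V :: "'a set" and w :: "'a \<Rightarrow> 'a \<Rightarrow> real" and \<gamma> :: real and S :: "'a set" and u v :: 'a
  assumes "maxcut_instance V w"
    and "stable_cut V \<gamma> w S"
    and "u \<in> V" and "v \<in> V" and "u \<noteq> v"
    and "u \<in> S \<longleftrightarrow> v \<in> S"
  shows "gamma_stable (merge_set V u v) \<gamma> (merge_weight w u v)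
         \<and> stable_cut (merge_set V u v) \<gamma> (merge_weight w u v) (induced_cut S u v)"
proof -
  have S: "S \<subseteq> V" using assms(2) unfolding stable_cut_def by blast
  have "is_max_cut (merge_set V u v) p (induced_cut S u v)"
    if p: "perturbation (merge_set V u v) \<gamma> (merge_weight w u v) p" for p
  proof (cases "\<gamma> < 1")
    case True
    have "\<forall>a\<in>merge_set V u v. \<forall>b\<in>merge_set V u v. 0 \<le> merge_weight w u v a b"
      using maxcut_instance_merge[OF assms(1,3)] unfolding maxcut_instance_def by blast
    then have "\<forall>a\<in>merge_set V u v. \<forall>b\<in>merge_set V u v. p a b = 0"
      using perturbation_below_one_vanishes[OF p True] by blast
    then show ?thesis by (rule is_max_cut_if_zero[OF _ induced_cut_subset[OF S assms(4,5)]])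
  next
    case False
    then have "1 \<le> \<gamma>" by simp
    then obtain W where W: "perturbation V \<gamma> w W"
      and Wp: "\<forall>a\<in>merge_set V u v. \<forall>b\<in>merge_set V u v. merge_weight W u v a b = p a b"
      by (rule perturbation_unmerge[OF assms(1,3-5) _ p])
    have "finite V" using assms(1) unfolding maxcut_instance_def by blast
    moreover have "is_max_cut V W S" using assms(2) W unfolding stable_cut_def by blast
    ultimately show ?thesis using is_max_cut_merge[OF _ assms(3-5) _ assms(6) Wp] by blast
  qed
  then have "stable_cut (merge_set V u v) \<gamma> (merge_weight w u v) (induced_cut S u v)"
    using induced_cut_subset[OF S assms(4,5)] unfolding stable_cut_def by blast
  then show ?thesis unfolding gamma_stable_def by blast
qed

end
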